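(* For every $\alpha\in\mathbb{R}$, the function $r_\alpha:\mathbb{R}\to\mathbb{R}$, $r_\alpha(x)=\alpha f(x)^2+2g(x)$, has a unique maximizer $c$, and $c$ is the unique real solution of the fixed point equation $x=\alpha f(x)$.
   Context: With $Z\sim\mathcal N(0,1)$ and $(y)_+=\max(y,0)$: $d(x)=\mathbb E(Z+x)_+^2$, $f(x)=\mathbb E(Z+x)_+/\sqrt{d(x)}$, $g(x)=\mathbb E\,Z(Z+x)_+/\sqrt{d(x)}$. *)

theory Defs
  imports "HOL-Probability.Probability"
begin

text \<open>Expectations over Z ~ N(0,1), written as Lebesgue integrals against the standard normal density.\<close>

definition pos_part :: "real \<Rightarrow> real" where
  "pos_part y = max y 0"

definition dG :: "real \<Rightarrow> real" where
  "dG x = (\<integral>z. std_normal_density z * (pos_part (z + x))\<^sup>2 \<partial>lborel)"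

definition fG :: "real \<Rightarrow> real" where
  "fG x = (\<integral>z. std_normal_density z * pos_part (z + x) \<partial>lborel) / sqrt (dG x)"

definition gG :: "real \<Rightarrow> real" where
  "gG x = (\<integral>z. std_normal_density z * (z * pos_part (z + x)) \<partial>lborel) / sqrt (dG x)"

definition rG :: "real \<Rightarrow> real \<Rightarrow> real" where
  "rG \<alpha> x = \<alpha> * (fG x)\<^sup>2 + 2 * gG x"

end

theory Submission
  imports Defs "HOL-Real_Asymp.Real_Asymp"
begin

(* Let Phi be the standard normal distribution function and m(x) = E (Z+x)_+.  Integrating the
   Gaussian tail moments gives m = x Phi + phi, d = x phi + (1 + x^2) Phi and E Z (Z+x)_+ = Phi, so
   f = m / sqrt d and g = Phi / sqrt d.  With the Cauchy-Schwarz gap u = Phi d - m^2 > 0 one finds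
   f' = u / d^(3/2) and g' = - x u / d^(3/2), hence r_alpha' = 2 u / d^(3/2) * (alpha f - x):
   r_alpha increases exactly where x < alpha f(x).  The line y = x and the curve y = alpha f(x) cross
   exactly once, for alpha <= 0 because f is increasing, for alpha > 0 because f(x)/x is decreasing
   on (0, oo) (equivalently x u < m d).  The crossing point is therefore both the unique solution of
   x = alpha f(x) and the unique maximiser of r_alpha. *)

lemma pos_if_nonneg_and_deriv_pos:
  fixes f f' :: "real \<Rightarrow> real"
  assumes nonneg: "\<And>x. 0 \<le> f x"
    and deriv: "\<And>x. (f has_real_derivative f' x) (at x)"
    and pos: "\<And>x. 0 < f' x"
  shows "0 < f x"
proof -
  have "f (x - 1) < f x"
  proof (rule DERIV_pos_imp_increasing[of "x - 1" x f])
    show "\<exists>d. (f has_real_derivative d) (at t) \<and> 0 < d" for t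
      using deriv[of t] pos[of t] by blast
  qed simp
  with nonneg[of "x - 1"] show ?thesis by simp
qed

lemma has_real_derivative_divide_sqrt:
  fixes u v :: "real \<Rightarrow> real"
  assumes "(u has_real_derivative u') (at x)" "(v has_real_derivative v') (at x)" "0 < v x"
  shows "((\<lambda>x. u x / sqrt (v x)) has_real_derivative
      (u' * v x - u x * v' / 2) / (v x * sqrt (v x))) (at x)"
proof -
  have "((\<lambda>x. u x / sqrt (v x)) has_real_derivative
      (u' * sqrt (v x) - u x * (inverse (sqrt (v x)) / 2 * v')) / (sqrt (v x) * sqrt (v x))) (at x)"
    using assms by (intro DERIV_divide DERIV_chain2[OF DERIV_real_sqrt]) auto
  moreover have "(u' * sqrt (v x) - u x * (inverse (sqrt (v x)) / 2 * v')) / (sqrt (v x) * sqrt (v x))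
      = (u' * v x - u x * v' / 2) / (v x * sqrt (v x))"
    using assms(3) by (simp add: field_simps)
  ultimately show ?thesis by simp
qed

lemma strict_antimono_on_divide_if_mult_deriv_less:
  fixes f f' :: "real \<Rightarrow> real"
  assumes deriv: "\<And>t. (f has_real_derivative f' t) (at t)"
    and less: "\<And>t. 0 < t \<Longrightarrow> t * f' t < f t"
  shows "strict_antimono_on {0<..} (\<lambda>x. f x / x)"
proof (rule monotone_onI)
  fix x y :: real
  assume "x \<in> {0<..}" "x < y"
  show "f y / y < f x / x"
  proof (rule DERIV_neg_imp_decreasing[OF \<open>x < y\<close>])
    fix t assume "x \<le> t"
    then have "0 < t" using \<open>x \<in> {0<..}\<close> by simp
    have "((\<lambda>t. f t / t) has_real_derivative (f' t * t - f t) / (t * t)) (at t)"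
      using deriv \<open>0 < t\<close> by (auto intro!: derivative_eq_intros)
    moreover have "(f' t * t - f t) / (t * t) < 0"
      using less[OF \<open>0 < t\<close>] \<open>0 < t\<close> by (simp add: divide_neg_pos mult.commute)
    ultimately show "\<exists>d. ((\<lambda>t. f t / t) has_real_derivative d) (at t) \<and> d < 0"
      by blast
  qed
qed

lemma exists_scaled_fixed_point:
  fixes f :: "real \<Rightarrow> real"
  assumes cont: "continuous_on UNIV f" and bound: "\<And>x. \<bar>f x\<bar> \<le> B"
  shows "\<exists>c. c = \<alpha> * f c"
proof -
  let ?b = "\<bar>\<alpha>\<bar> * B"
  have scaled_bound: "\<bar>\<alpha> * f x\<bar> \<le> ?b" for x
    using bound[of x] by (simp add: abs_mult mult_left_mono)
  have "\<exists>x. - ?b \<le> x \<and> x \<le> ?b \<and> x - \<alpha> * f x = 0"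
  proof (rule IVT')
    show "continuous_on {- ?b..?b} (\<lambda>x. x - \<alpha> * f x)"
      by (intro continuous_intros continuous_on_subset[OF cont]) auto
  qed (use scaled_bound[of "- ?b"] scaled_bound[of ?b] in \<open>auto simp: abs_le_iff\<close>)
  then show ?thesis by auto
qed

lemma scaled_fixed_point_crossing:
  fixes f :: "real \<Rightarrow> real"
  assumes pos: "\<And>x. 0 < f x" and mono: "mono f"
    and ratio: "strict_antimono_on {0<..} (\<lambda>x. f x / x)"
    and fixed: "c = \<alpha> * f c"
  shows "x < c \<Longrightarrow> x < \<alpha> * f x" and "c < x \<Longrightarrow> \<alpha> * f x < x"
proof -
  consider "\<alpha> \<le> 0" | "0 < \<alpha>" "0 < c"
    using fixed pos[of c] by (metis mult_pos_pos not_le)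
  note cases = this
  show "x < \<alpha> * f x" if "x < c"
  proof (cases rule: cases)
    case 1
    have "\<alpha> * f c \<le> \<alpha> * f x"
      using monoD[OF mono] \<open>x < c\<close> 1 by (simp add: mult_left_mono_neg)
    then show ?thesis using fixed \<open>x < c\<close> by linarith
  next
    case 2
    show ?thesis
    proof (cases "0 < x")
      case True
      have "f c / c < f x / x"
        using monotone_onD[OF ratio, of x c] True \<open>x < c\<close> 2 by simp
      then have "\<alpha> * (f c / c) < \<alpha> * (f x / x)"
        using 2(1) by (rule mult_strict_left_mono)
      moreover have "\<alpha> * (f c / c) = 1"
        using fixed[symmetric] 2 by simp
      ultimately have "1 < \<alpha> * (f x / x)" by simp
      then show ?thesis
        using True by (simp add: field_simps)
    next
      case False
      have "0 < \<alpha> * f x" using 2 pos[of x] by simp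
      then show ?thesis using False by linarith
    qed
  qed
  show "\<alpha> * f x < x" if "c < x"
  proof (cases rule: cases)
    case 1
    have "\<alpha> * f x \<le> \<alpha> * f c"
      using monoD[OF mono] \<open>c < x\<close> 1 by (simp add: mult_left_mono_neg)
    then show ?thesis using fixed \<open>c < x\<close> by linarith
  next
    case 2
    have "f x / x < f c / c"
      using monotone_onD[OF ratio, of c x] \<open>c < x\<close> 2 by simp
    then have "\<alpha> * (f x / x) < \<alpha> * (f c / c)"
      using 2(1) by (rule mult_strict_left_mono)
    moreover have "\<alpha> * (f c / c) = 1"
      using fixed[symmetric] 2 by simp
    ultimately have "\<alpha> * (f x / x) < 1" by simp
    then show ?thesis
      using 2 \<open>c < x\<close> by (simp add: field_simps)
  qed
qed

lemma strict_global_max_if_deriv_sign: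
  fixes r r' :: "real \<Rightarrow> real"
  assumes deriv: "\<And>x. (r has_real_derivative r' x) (at x)"
    and up: "\<And>x. x < c \<Longrightarrow> 0 < r' x" and down: "\<And>x. c < x \<Longrightarrow> r' x < 0"
    and "x \<noteq> c"
  shows "r x < r c"
proof -
  have cont: "continuous_on A r" for A
    using deriv by (meson DERIV_isCont continuous_at_imp_continuous_on)
  consider "x < c" | "c < x" using \<open>x \<noteq> c\<close> by linarith
  then show ?thesis
  proof cases
    case 1
    show ?thesis
      by (rule DERIV_pos_imp_increasing_open[OF 1 _ cont]) (use deriv up in blast)
  next
    case 2
    show ?thesis
      by (rule DERIV_neg_imp_decreasing_open[OF 2 _ cont]) (use deriv down in blast)
  qed
qed

lemma integral_greaterThan_by_antiderivative:
  fixes F f :: "real \<Rightarrow> real"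
  assumes F: "\<And>x. (F has_real_derivative f x) (at x)"
    and f: "\<And>x. isCont f x"
    and F_lim: "(F \<longlongrightarrow> 0) at_top"
    and f_int: "set_integrable lborel {a<..} f"
  shows "(\<integral>z. indicator {a<..} z * f z \<partial>lborel) = - F a"
proof -
  have "(LBINT z=ereal a..\<infinity>. f z) = 0 - F a"
  proof (rule interval_integral_FTC_integrable)
    show "(F has_vector_derivative f x) (at x)" for x
      using F by (simp add: has_real_derivative_iff_has_vector_derivative)
    have "(F \<longlongrightarrow> F a) (at_right a)"
      using F DERIV_isCont isCont_def tendsto_within_subset by blast
    then show "((F \<circ> real_of_ereal) \<longlongrightarrow> F a) (at_right (ereal a))"
      by (simp add: ereal_tendsto_simps)
    show "((F \<circ> real_of_ereal) \<longlongrightarrow> 0) (at_left \<infinity>)"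
      using F_lim by (simp add: ereal_tendsto_simps)
  qed (use f f_int in auto)
  then show ?thesis
    by (simp add: interval_integral_to_infinity_eq set_lebesgue_integral_def)
qed

section \<open>The standard normal distribution\<close>

lemma has_real_derivative_std_normal_density:
  "(std_normal_density has_real_derivative - x * std_normal_density x) (at x)"
  unfolding std_normal_density_def
  by (auto intro!: derivative_eq_intros simp: power2_eq_square field_simps)

lemma isCont_std_normal_density [continuous_intros]: "isCont std_normal_density x"
  using has_real_derivative_std_normal_density DERIV_isCont by blast

lemma std_normal_density_pos: "0 < std_normal_density x"
  by (simp add: normal_density_pos)

lemma std_normal_density_minus [simp]: "std_normal_density (- x) = std_normal_density x"
  unfolding std_normal_density_def by simp

lemma tendsto_std_normal_density_at_top: "(std_normal_density \<longlongrightarrow> 0) at_top"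
  unfolding std_normal_density_def by real_asymp

lemma tendsto_std_normal_density_at_bot: "(std_normal_density \<longlongrightarrow> 0) at_bot"
  unfolding std_normal_density_def by real_asymp

lemma tendsto_mult_std_normal_density_at_top: "((\<lambda>x. x * std_normal_density x) \<longlongrightarrow> 0) at_top"
  unfolding std_normal_density_def by real_asymp

lemma integrable_std_normal_moment_indicator:
  "A \<in> sets lborel \<Longrightarrow> integrable lborel (\<lambda>z. indicator A z * (std_normal_density z * z ^ k))"
  using integrable_mult_indicator[OF _ integrable_std_normal_moment] by simp

lemma integral_std_normal_tail_moment_1:
  "(\<integral>z. indicator {a<..} z * (std_normal_density z * z) \<partial>lborel) = std_normal_density a"
proof -
  have "((\<lambda>x. - std_normal_density x) has_real_derivative std_normal_density x * x) (at x)" for x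
    using DERIV_minus[OF has_real_derivative_std_normal_density] by (simp add: mult.commute)
  moreover have "((\<lambda>x. - std_normal_density x) \<longlongrightarrow> 0) at_top"
    using tendsto_minus[OF tendsto_std_normal_density_at_top] by simp
  ultimately show ?thesis
    using integrable_std_normal_moment_indicator[of "{a<..}" 1]
    by (subst integral_greaterThan_by_antiderivative)
      (auto intro!: continuous_intros simp: set_integrable_def)
qed

definition std_normal_tail :: "real \<Rightarrow> real" where
  "std_normal_tail a = (\<integral>z. indicator {a<..} z * std_normal_density z \<partial>lborel)"

lemma has_real_derivative_std_normal_tail:
  "(std_normal_tail has_real_derivative - std_normal_density a) (at a)"
proof -
  let ?I = "\<lambda>u. LBINT y=ereal 0..ereal u. std_normal_density y"
  have tail_split: "std_normal_tail u = (LBINT z=ereal 0..\<infinity>. std_normal_density z) - ?I u" for u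
  proof -
    have "interval_lebesgue_integrable lborel (min (ereal u) (min 0 \<infinity>)) (max (ereal u) (max 0 \<infinity>))
        std_normal_density"
      unfolding interval_lebesgue_integrable_def set_integrable_def
      using integrable_std_normal_moment_indicator[of "einterval (min (ereal u) 0) \<infinity>" 0] by simp
    from interval_integral_sum[OF this] show ?thesis
      using interval_integral_endpoints_reverse[of "ereal u" 0 std_normal_density]
      by (simp add: std_normal_tail_def interval_integral_to_infinity_eq set_lebesgue_integral_def
          zero_ereal_def)
  qed
  define lo hi where "lo = min a 0 - 1" and "hi = max a 0 + 1"
  have "(?I has_vector_derivative std_normal_density a) (at a within {lo..hi})"
    by (rule interval_integral_FTC2)
      (auto simp: lo_def hi_def intro!: continuous_at_imp_continuous_on continuous_intros)
  moreover have "at a within {lo..hi} = at a"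
    by (rule at_within_Icc_at) (auto simp: lo_def hi_def)
  ultimately have "(?I has_real_derivative std_normal_density a) (at a)"
    by (simp add: has_real_derivative_iff_has_vector_derivative)
  then show ?thesis
    unfolding tail_split[abs_def] by (auto intro!: derivative_eq_intros)
qed

lemma std_normal_tail_nonneg: "0 \<le> std_normal_tail a"
  unfolding std_normal_tail_def by (auto intro!: integral_nonneg_AE simp: indicator_def)

lemma std_normal_tail_le_1: "std_normal_tail a \<le> 1"
proof -
  have "std_normal_tail a \<le> (\<integral>z. std_normal_density z \<partial>lborel)"
    unfolding std_normal_tail_def
    using integrable_std_normal_moment_indicator[of "{a<..}" 0]
    by (intro integral_mono) (auto simp: indicator_def)
  then show ?thesis by simp
qed

lemma mills_inequality:
  assumes "0 < a"
  shows "a * std_normal_tail a \<le> std_normal_density a"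
proof -
  have "a * std_normal_tail a = (\<integral>z. indicator {a<..} z * (a * std_normal_density z) \<partial>lborel)"
    by (simp add: std_normal_tail_def mult.left_commute)
  also have "\<dots> \<le> (\<integral>z. indicator {a<..} z * (std_normal_density z * z) \<partial>lborel)"
  proof (rule integral_mono)
    show "integrable lborel (\<lambda>z. indicator {a<..} z * (a * std_normal_density z))"
      using integrable_mult_right[OF integrable_std_normal_moment_indicator[of "{a<..}" 0], of a]
      by (simp add: mult.left_commute)
    show "integrable lborel (\<lambda>z. indicator {a<..} z * (std_normal_density z * z))"
      using integrable_std_normal_moment_indicator[of "{a<..}" 1] by simp
  qed (auto simp: indicator_def mult.commute intro!: mult_right_mono)
  also have "\<dots> = std_normal_density a"
    by (rule integral_std_normal_tail_moment_1)
  finally show ?thesis .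
qed

lemma tendsto_std_normal_tail_at_top: "(std_normal_tail \<longlongrightarrow> 0) at_top"
proof (rule tendsto_sandwich[of "\<lambda>_. 0" _ _ "\<lambda>a. std_normal_density a / a"])
  show "\<forall>\<^sub>F a in at_top. std_normal_tail a \<le> std_normal_density a / a"
    using eventually_gt_at_top[of 0]
    by eventually_elim (use mills_inequality in \<open>simp add: pos_le_divide_eq mult.commute\<close>)
  show "((\<lambda>a. std_normal_density a / a) \<longlongrightarrow> 0) at_top"
    using tendsto_mult[OF tendsto_std_normal_density_at_top tendsto_inverse_0_at_top[OF filterlim_ident]]
    by (simp add: divide_inverse)
qed (simp_all add: std_normal_tail_nonneg)

lemma integral_std_normal_tail_moment_2:
  "(\<integral>z. indicator {a<..} z * (std_normal_density z * z\<^sup>2) \<partial>lborel)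
     = a * std_normal_density a + std_normal_tail a"
proof -
  have "((\<lambda>x. - x * std_normal_density x - std_normal_tail x) has_real_derivative
      std_normal_density x * x\<^sup>2) (at x)" for x
    by (auto intro!: derivative_eq_intros has_real_derivative_std_normal_density
        has_real_derivative_std_normal_tail simp: power2_eq_square)
  moreover have "((\<lambda>x. - x * std_normal_density x - std_normal_tail x) \<longlongrightarrow> 0) at_top"
    using tendsto_diff[OF tendsto_minus[OF tendsto_mult_std_normal_density_at_top]
        tendsto_std_normal_tail_at_top] by simp
  ultimately show ?thesis
    using integrable_std_normal_moment_indicator[of "{a<..}" 2]
    by (subst integral_greaterThan_by_antiderivative)
      (auto intro!: continuous_intros simp: set_integrable_def)
qed

(* By the symmetry of the density, this is P(Z \<le> x). *)
definition std_normal_cdf :: "real \<Rightarrow> real" where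
  "std_normal_cdf x = std_normal_tail (- x)"

lemma has_real_derivative_std_normal_cdf:
  "(std_normal_cdf has_real_derivative std_normal_density x) (at x)"
proof -
  have "((\<lambda>x. std_normal_tail (- x)) has_real_derivative (- std_normal_density (- x)) * (- 1)) (at x)"
    by (rule DERIV_chain2[OF has_real_derivative_std_normal_tail]) (auto intro!: derivative_eq_intros)
  then show ?thesis
    by (simp add: std_normal_cdf_def[abs_def])
qed

lemma std_normal_cdf_pos: "0 < std_normal_cdf x"
  by (rule pos_if_nonneg_and_deriv_pos[OF _ has_real_derivative_std_normal_cdf std_normal_density_pos])
    (simp add: std_normal_cdf_def std_normal_tail_nonneg)

lemma std_normal_cdf_le_1: "std_normal_cdf x \<le> 1"
  by (simp add: std_normal_cdf_def std_normal_tail_le_1)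

lemma tendsto_std_normal_cdf_at_bot: "(std_normal_cdf \<longlongrightarrow> 0) at_bot"
  unfolding std_normal_cdf_def[abs_def]
  by (rule filterlim_compose[OF tendsto_std_normal_tail_at_top filterlim_uminus_at_top_at_bot])

section \<open>Closed forms of the Gaussian expectations\<close>

lemma pos_part_shift: "pos_part (z + x) = indicator {- x<..} z * (z + x)"
  by (auto simp: pos_part_def indicator_def)

definition mG :: "real \<Rightarrow> real" where
  "mG x = x * std_normal_cdf x + std_normal_density x"

lemma integral_pos_part: "(\<integral>z. std_normal_density z * pos_part (z + x) \<partial>lborel) = mG x"
proof -
  let ?A = "{- x<..}"
  have "(\<lambda>z. std_normal_density z * pos_part (z + x))
      = (\<lambda>z. indicator ?A z * (std_normal_density z * z) + x * (indicator ?A z * std_normal_density z))"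
    by (auto simp: pos_part_shift algebra_simps)
  then show ?thesis
    using integrable_std_normal_moment_indicator[of ?A 0] integrable_std_normal_moment_indicator[of ?A 1]
    by (simp add: mG_def std_normal_cdf_def std_normal_tail_def integral_std_normal_tail_moment_1)
qed

lemma dG_eq: "dG x = x * std_normal_density x + (1 + x\<^sup>2) * std_normal_cdf x"
proof -
  let ?A = "{- x<..}"
  have "(\<lambda>z. std_normal_density z * (pos_part (z + x))\<^sup>2)
      = (\<lambda>z. indicator ?A z * (std_normal_density z * z\<^sup>2)
          + (2 * x * (indicator ?A z * (std_normal_density z * z))
            + x\<^sup>2 * (indicator ?A z * std_normal_density z)))"
    by (auto simp: pos_part_shift power2_eq_square algebra_simps indicator_def)
  then have "dG x = (\<integral>z. indicator ?A z * (std_normal_density z * z\<^sup>2) \<partial>lborel)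
      + (2 * x * (\<integral>z. indicator ?A z * (std_normal_density z * z) \<partial>lborel)
        + x\<^sup>2 * (\<integral>z. indicator ?A z * std_normal_density z \<partial>lborel))"
    using integrable_std_normal_moment_indicator[of ?A 0] integrable_std_normal_moment_indicator[of ?A 1]
      integrable_std_normal_moment_indicator[of ?A 2]
    by (simp add: dG_def)
  also have "\<dots> = - x * std_normal_density x + std_normal_cdf x
      + (2 * x * std_normal_density x + x\<^sup>2 * std_normal_cdf x)"
    by (simp add: std_normal_cdf_def std_normal_tail_def integral_std_normal_tail_moment_1
        integral_std_normal_tail_moment_2)
  finally show ?thesis
    by (simp add: algebra_simps)
qed

lemma integral_mult_pos_part:
  "(\<integral>z. std_normal_density z * (z * pos_part (z + x)) \<partial>lborel) = std_normal_cdf x"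
proof -
  let ?A = "{- x<..}"
  have "(\<lambda>z. std_normal_density z * (z * pos_part (z + x)))
      = (\<lambda>z. indicator ?A z * (std_normal_density z * z\<^sup>2)
          + x * (indicator ?A z * (std_normal_density z * z)))"
    by (auto simp: pos_part_shift power2_eq_square algebra_simps indicator_def)
  then show ?thesis
    using integrable_std_normal_moment_indicator[of ?A 1] integrable_std_normal_moment_indicator[of ?A 2]
    by (simp add: std_normal_cdf_def std_normal_tail_def integral_std_normal_tail_moment_1
        integral_std_normal_tail_moment_2)
qed

lemma has_real_derivative_mG:
  "(mG has_real_derivative std_normal_cdf x) (at x)"
  unfolding mG_def[abs_def]
  by (auto intro!: derivative_eq_intros has_real_derivative_std_normal_cdf has_real_derivative_std_normal_density)

lemma has_real_derivative_dG:
  "(dG has_real_derivative 2 * mG x) (at x)"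
  unfolding dG_eq[abs_def] mG_def
  by (auto intro!: derivative_eq_intros has_real_derivative_std_normal_cdf has_real_derivative_std_normal_density
      simp: algebra_simps power2_eq_square)

lemma mG_pos: "0 < mG x"
proof (rule pos_if_nonneg_and_deriv_pos[OF _ has_real_derivative_mG std_normal_cdf_pos])
  show "0 \<le> mG y" for y
    unfolding integral_pos_part[symmetric] by (auto intro!: integral_nonneg_AE simp: pos_part_def)
qed

lemma dG_pos: "0 < dG x"
proof (rule pos_if_nonneg_and_deriv_pos[OF _ has_real_derivative_dG])
  show "0 \<le> dG y" for y
    unfolding dG_def by (auto intro!: integral_nonneg_AE)
qed (simp add: mG_pos)

lemma tendsto_mG_at_bot: "(mG \<longlongrightarrow> 0) at_bot"
proof (rule tendsto_sandwich[of "\<lambda>_. 0" _ _ std_normal_density])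
  show "\<forall>\<^sub>F x in at_bot. mG x \<le> std_normal_density x"
    using eventually_le_at_bot[of 0]
    by eventually_elim (use std_normal_cdf_pos in \<open>auto simp: mG_def mult_nonpos_nonneg less_imp_le\<close>)
qed (simp_all add: mG_pos less_imp_le tendsto_std_normal_density_at_bot)

(* The Cauchy-Schwarz inequality (E (Z+x)_+)^2 \<le> P(Z > -x) E (Z+x)_+^2 says cs_gap \<ge> 0. *)
definition cs_gap :: "real \<Rightarrow> real" where
  "cs_gap x = std_normal_cdf x * dG x - (mG x)\<^sup>2"

lemma cs_gap_eq: "cs_gap x = (std_normal_cdf x)\<^sup>2 - std_normal_density x * mG x"
  by (simp add: cs_gap_def dG_eq mG_def power2_eq_square algebra_simps)

lemma has_real_derivative_cs_gap:
  "(cs_gap has_real_derivative std_normal_density x * dG x) (at x)"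
  unfolding cs_gap_eq[abs_def]
  by (auto intro!: derivative_eq_intros has_real_derivative_std_normal_cdf
      has_real_derivative_std_normal_density has_real_derivative_mG
      simp: dG_eq mG_def algebra_simps power2_eq_square)

lemma cs_gap_pos: "0 < cs_gap x"
proof -
  have "(cs_gap \<longlongrightarrow> 0) at_bot"
    unfolding cs_gap_eq[abs_def]
    using tendsto_diff[OF tendsto_power[OF tendsto_std_normal_cdf_at_bot, of 2]
        tendsto_mult[OF tendsto_std_normal_density_at_bot tendsto_mG_at_bot]]
    by simp
  then show ?thesis
  proof (rule DERIV_pos_imp_increasing_at_bot[where f = cs_gap, rotated])
    show "\<exists>d. (cs_gap has_real_derivative d) (at t) \<and> 0 < d" for t
      using has_real_derivative_cs_gap[of t] std_normal_density_pos[of t] dG_pos[of t] by auto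
  qed
qed

section \<open>The functions f, g and r\<close>

lemma fG_eq: "fG x = mG x / sqrt (dG x)"
  by (simp add: fG_def integral_pos_part)

lemma gG_eq: "gG x = std_normal_cdf x / sqrt (dG x)"
  by (simp add: gG_def integral_mult_pos_part)

lemma has_real_derivative_fG:
  "(fG has_real_derivative cs_gap x / (dG x * sqrt (dG x))) (at x)"
  using has_real_derivative_divide_sqrt[OF has_real_derivative_mG has_real_derivative_dG dG_pos]
  by (simp add: fG_eq[abs_def] cs_gap_def power2_eq_square)

lemma has_real_derivative_gG:
  "(gG has_real_derivative - x * (cs_gap x / (dG x * sqrt (dG x)))) (at x)"
proof -
  have eq: "std_normal_density x * dG x - std_normal_cdf x * (2 * mG x) / 2 = - x * cs_gap x"
    by (simp add: cs_gap_def dG_eq mG_def algebra_simps power2_eq_square)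
  show ?thesis
    using has_real_derivative_divide_sqrt[where x = x,
        OF has_real_derivative_std_normal_cdf has_real_derivative_dG dG_pos, unfolded eq]
    by (simp add: gG_eq[abs_def])
qed

lemma has_real_derivative_rG:
  "(rG \<alpha> has_real_derivative 2 * (cs_gap x / (dG x * sqrt (dG x))) * (\<alpha> * fG x - x)) (at x)"
  unfolding rG_def[abs_def]
  by (auto intro!: derivative_eq_intros has_real_derivative_fG has_real_derivative_gG
      simp: algebra_simps diff_divide_distrib)

lemma fG_pos: "0 < fG x"
  by (simp add: fG_eq mG_pos dG_pos)

lemma fG_le_1: "fG x \<le> 1"
proof -
  have "(mG x)\<^sup>2 < std_normal_cdf x * dG x"
    using cs_gap_pos[of x] by (simp add: cs_gap_def)
  also have "\<dots> \<le> dG x"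
    using std_normal_cdf_le_1[of x] dG_pos[of x] by (simp add: mult_le_cancel_right1)
  finally have "mG x \<le> sqrt (dG x)"
    by (intro real_le_rsqrt) simp
  then show ?thesis
    by (simp add: fG_eq dG_pos)
qed

lemma mono_fG: "mono fG"
  using has_real_derivative_fG cs_gap_pos dG_pos
  by (intro monoI deriv_nonneg_imp_mono[where g = fG]) (auto intro!: less_imp_le)

lemma mult_deriv_fG_less:
  assumes "0 < x"
  shows "x * (cs_gap x / (dG x * sqrt (dG x))) < fG x"
proof -
  have "mG x * dG x - x * cs_gap x
      = x * (mG x)\<^sup>2 + std_normal_cdf x * std_normal_density x + x * std_normal_density x * mG x"
    by (simp add: cs_gap_def dG_eq mG_def algebra_simps power2_eq_square)
  also have "\<dots> > 0"
    using assms mG_pos[of x] std_normal_cdf_pos[of x] std_normal_density_pos[of x]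
    by (intro add_pos_pos mult_pos_pos) auto
  finally have "x * cs_gap x < mG x * dG x" by simp
  then show ?thesis
    using dG_pos[of x] by (simp add: fG_eq field_simps)
qed

lemma strict_antimono_on_fG_divide: "strict_antimono_on {0<..} (\<lambda>x. fG x / x)"
  using has_real_derivative_fG mult_deriv_fG_less by (rule strict_antimono_on_divide_if_mult_deriv_less)

lemma exists_fixed_point_scaled_fG: "\<exists>c. c = \<alpha> * fG c"
proof (rule exists_scaled_fixed_point)
  show "continuous_on UNIV fG"
    using has_real_derivative_fG by (meson DERIV_isCont continuous_at_imp_continuous_on)
  show "\<bar>fG x\<bar> \<le> 1" for x
    using fG_pos[of x] fG_le_1[of x] by simp
qed

lemma fG_crossing:
  assumes "c = \<alpha> * fG c"
  shows "x < c \<Longrightarrow> x < \<alpha> * fG x" and "c < x \<Longrightarrow> \<alpha> * fG x < x"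
  using scaled_fixed_point_crossing[OF fG_pos mono_fG strict_antimono_on_fG_divide assms] by blast+

lemma rG_less_at_fixed_point:
  assumes fixed: "c = \<alpha> * fG c" and "x \<noteq> c"
  shows "rG \<alpha> x < rG \<alpha> c"
proof (rule strict_global_max_if_deriv_sign[OF has_real_derivative_rG _ _ \<open>x \<noteq> c\<close>])
  have factor_pos: "0 < 2 * (cs_gap y / (dG y * sqrt (dG y)))" for y
    using cs_gap_pos[of y] dG_pos[of y] by simp
  show "0 < 2 * (cs_gap y / (dG y * sqrt (dG y))) * (\<alpha> * fG y - y)" if "y < c" for y
    using fG_crossing(1)[OF fixed that] factor_pos[of y] by (intro mult_pos_pos) auto
  show "2 * (cs_gap y / (dG y * sqrt (dG y))) * (\<alpha> * fG y - y) < 0" if "c < y" for y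
    using fG_crossing(2)[OF fixed that] factor_pos[of y] by (intro mult_pos_neg) auto
qed

theorem mainTheorem4:
  fixes \<alpha> :: real
  shows "\<exists>c. (\<forall>x. rG \<alpha> x \<le> rG \<alpha> c)
            \<and> (\<forall>c'. (\<forall>x. rG \<alpha> x \<le> rG \<alpha> c') \<longrightarrow> c' = c)
            \<and> c = \<alpha> * fG c
            \<and> (\<forall>y. y = \<alpha> * fG y \<longrightarrow> y = c)"
proof -
  obtain c where fixed: "c = \<alpha> * fG c"
    using exists_fixed_point_scaled_fG by blast
  note less_max = rG_less_at_fixed_point[OF fixed]
  show ?thesis
  proof (intro exI[of _ c] conjI allI impI)
    show "rG \<alpha> x \<le> rG \<alpha> c" for x
      using less_max[of x] by (cases "x = c") auto
    show "c' = c" if "\<forall>x. rG \<alpha> x \<le> rG \<alpha> c'" for c'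
      using less_max[of c'] spec[OF that, of c] by (cases "c' = c") auto
    show "y = c" if "y = \<alpha> * fG y" for y
      using fG_crossing[OF fixed, of y] that by (cases y c rule: linorder_cases) auto
  qed (rule fixed)
qed

end
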